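(* Let $S=\{0,1,\dots,p-1\}$ with $p\ge 2$, let $m\ge 2$, and let $f:S^m\to S$ be a local rule. The global map $\tau$ is injective if and only if there exists neither a pair of replaceable local configurations nor a pair of periodic local configurations for $f$.
   Context: A local configuration is a finite word over $S$. For a word $w=w_1w_2\cdots w_n$ with $n\ge m$, its successor under $f$ is the word $\hat f(w)=u_1\cdots u_{n-m+1}$ with $u_j=f(w_j,w_{j+1},\dots,w_{j+m-1})$. For $k\le n$, $\mathrm{left}_k(w)=w_1\cdots w_k$ and $\mathrm{right}_k(w)=w_{n-k+1}\cdots w_n$. The global map is $\tau:S^{\mathbb Z}\to S^{\mathbb Z}$, $\tau(c)(i)=f(c(i-L),\dots,c(i+R))$ for fixed integers $L,R\ge 0$ with $L+1+R=m$; the CA is (globally) injective if $\tau$ is injective. Two local configurations $\alpha,\beta$ of the same length $n$ are replaceable if: $n\ge 2m-1$; $\alpha\ne\beta$; $\mathrm{left}_{m-1}(\alpha)=\mathrm{left}_{m-1}(\beta)$; $\mathrm{right}_{m-1}(\alpha)=\mathrm{right}_{m-1}(\beta)$; and $\hat f(\alpha)=\hat f(\beta)$. They are periodic if: $n\ge m$; $\alpha\ne\beta$; $\mathrm{left}_{m-1}(\alpha)=\mathrm{right}_{m-1}(\alpha)$; $\mathrm{left}_{m-1}(\beta)=\mathrm{right}_{m-1}(\beta)$; and $\hat f(\alpha)=\hat f(\beta)$. *)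

theory Defs
  imports Main
begin

text \<open>Alphabet S = {0,...,p-1} is {..<p}; words are lists over it; a local rule
  of arity m is a function on lists (only its values on words of length m matter).\<close>

definition word_over :: "nat \<Rightarrow> nat list \<Rightarrow> bool" where
  "word_over p w \<longleftrightarrow> set w \<subseteq> {..<p}"

definition local_rule :: "nat \<Rightarrow> nat \<Rightarrow> (nat list \<Rightarrow> nat) \<Rightarrow> bool" where
  "local_rule p m f \<longleftrightarrow> (\<forall>w. length w = m \<and> word_over p w \<longrightarrow> f w < p)"

definition succ_word :: "(nat list \<Rightarrow> nat) \<Rightarrow> nat \<Rightarrow> nat list \<Rightarrow> nat list" where
  "succ_word f m w = map (\<lambda>j. f (take m (drop j w))) [0..<length w - m + 1]"

definition left_k :: "nat \<Rightarrow> nat list \<Rightarrow> nat list" where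
  "left_k k w = take k w"

definition right_k :: "nat \<Rightarrow> nat list \<Rightarrow> nat list" where
  "right_k k w = drop (length w - k) w"

definition replaceable :: "nat \<Rightarrow> nat \<Rightarrow> (nat list \<Rightarrow> nat) \<Rightarrow> nat list \<Rightarrow> nat list \<Rightarrow> bool" where
  "replaceable p m f \<alpha> \<beta> \<longleftrightarrow>
     word_over p \<alpha> \<and> word_over p \<beta> \<and> length \<alpha> = length \<beta> \<and>
     length \<alpha> \<ge> 2 * m - 1 \<and> \<alpha> \<noteq> \<beta> \<and>
     left_k (m - 1) \<alpha> = left_k (m - 1) \<beta> \<and>
     right_k (m - 1) \<alpha> = right_k (m - 1) \<beta> \<and>
     succ_word f m \<alpha> = succ_word f m \<beta>"

definition periodic_pair :: "nat \<Rightarrow> nat \<Rightarrow> (nat list \<Rightarrow> nat) \<Rightarrow> nat list \<Rightarrow> nat list \<Rightarrow> bool" where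
  "periodic_pair p m f \<alpha> \<beta> \<longleftrightarrow>
     word_over p \<alpha> \<and> word_over p \<beta> \<and> length \<alpha> = length \<beta> \<and>
     length \<alpha> \<ge> m \<and> \<alpha> \<noteq> \<beta> \<and>
     left_k (m - 1) \<alpha> = right_k (m - 1) \<alpha> \<and>
     left_k (m - 1) \<beta> = right_k (m - 1) \<beta> \<and>
     succ_word f m \<alpha> = succ_word f m \<beta>"

definition global_map :: "(nat list \<Rightarrow> nat) \<Rightarrow> nat \<Rightarrow> nat \<Rightarrow> (int \<Rightarrow> nat) \<Rightarrow> (int \<Rightarrow> nat)" where
  "global_map f L R c = (\<lambda>i. f (map (\<lambda>k. c (i - int L + int k)) [0..<L + 1 + R]))"

definition configs :: "nat \<Rightarrow> (int \<Rightarrow> nat) set" where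
  "configs p = {c. \<forall>i. c i < p}"

end

theory Submission
  imports Defs
begin

text \<open>If two distinct configurations have the same image, look at the positions where their
  windows of length m-1 differ. If there are infinitely many, two of them carry the same pair
  of windows, and the segment between them is a periodic pair. Otherwise the disagreement is
  confined to a bounded region, flanked by agreeing windows of length m-1, and that region is a
  replaceable pair. Conversely, a replaceable pair padded by zeros, or a periodic pair repeated
  periodically, yields two distinct configurations with the same image.\<close>

definition window :: "(int \<Rightarrow> nat) \<Rightarrow> int \<Rightarrow> nat \<Rightarrow> nat list" where
  "window c a n = map (\<lambda>k. c (a + int k)) [0..<n]"

lemma length_window [simp]: "length (window c a n) = n"
  by (simp add: window_def)

lemma nth_window [simp]: "i < n \<Longrightarrow> window c a n ! i = c (a + int i)"
  by (simp add: window_def)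

lemma take_drop_window: "j + l \<le> n \<Longrightarrow> take l (drop j (window c a n)) = window c (a + int j) l"
  by (rule nth_equalityI) (auto simp: add.assoc)

lemma left_k_window: "l \<le> n \<Longrightarrow> left_k l (window c a n) = window c a l"
  unfolding left_k_def by (rule nth_equalityI) auto

lemma right_k_window: "l \<le> n \<Longrightarrow> right_k l (window c a n) = window c (a + int (n - l)) l"
  unfolding right_k_def by (rule nth_equalityI) (auto simp: algebra_simps)

lemma word_over_window: "c \<in> configs p \<Longrightarrow> word_over p (window c a n)"
  by (auto simp: word_over_def configs_def window_def)

lemma finite_range_window:
  assumes "c \<in> configs p"
  shows "finite (range (\<lambda>a. window c a n))"
proof (rule finite_subset)
  show "range (\<lambda>a. window c a n) \<subseteq> {w. set w \<subseteq> {..<p} \<and> length w = n}"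
    using word_over_window[OF assms] by (auto simp: word_over_def)
  show "finite {w. set w \<subseteq> {..<p} \<and> length w = n}"
    by (rule finite_lists_length_eq) simp
qed

lemma global_map_window: "L + 1 + R = m \<Longrightarrow> global_map f L R c i = f (window c (i - int L) m)"
  unfolding global_map_def window_def by (simp add: algebra_simps)

lemma global_map_eq_iff:
  assumes "L + 1 + R = m"
  shows "global_map f L R c1 = global_map f L R c2 \<longleftrightarrow> (\<forall>a. f (window c1 a m) = f (window c2 a m))"
proof
  assume eq: "global_map f L R c1 = global_map f L R c2"
  show "\<forall>a. f (window c1 a m) = f (window c2 a m)"
  proof
    fix a
    have "global_map f L R c1 (a + int L) = global_map f L R c2 (a + int L)"
      using eq by simp
    then show "f (window c1 a m) = f (window c2 a m)"
      using global_map_window[OF assms] by simp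
  qed
qed (auto simp: global_map_window[OF assms])

lemma succ_word_window:
  "m \<le> n \<Longrightarrow> succ_word f m (window c a n) = map (\<lambda>j. f (window c (a + int j) m)) [0..<n - m + 1]"
  unfolding succ_word_def length_window
  by (rule map_cong[OF refl]) (simp del: upt_Suc add: take_drop_window)

lemma nth_succ_word: "j < length w - m + 1 \<Longrightarrow> succ_word f m w ! j = f (take m (drop j w))"
  by (simp del: upt_Suc add: succ_word_def)

lemma succ_word_eqD:
  assumes "succ_word f m \<alpha> = succ_word f m \<beta>" and "length \<alpha> = length \<beta>" and "j + m \<le> length \<alpha>"
  shows "f (take m (drop j \<alpha>)) = f (take m (drop j \<beta>))"
  using assms nth_succ_word[of j \<alpha> m f] nth_succ_word[of j \<beta> m f] by simp

lemma replaceable_windowI: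
  assumes "c1 \<in> configs p" and "c2 \<in> configs p"
    and "\<And>a. f (window c1 a m) = f (window c2 a m)"
    and "2 * m - 1 \<le> n" and "window c1 a n \<noteq> window c2 a n"
    and "window c1 a (m - 1) = window c2 a (m - 1)"
    and "window c1 (a + int (n - (m - 1))) (m - 1) = window c2 (a + int (n - (m - 1))) (m - 1)"
  shows "replaceable p m f (window c1 a n) (window c2 a n)"
  using assms by (auto simp: replaceable_def left_k_window right_k_window word_over_window succ_word_window)

lemma periodic_pair_windowI:
  assumes "c1 \<in> configs p" and "c2 \<in> configs p"
    and "\<And>a. f (window c1 a m) = f (window c2 a m)"
    and "m \<le> n" and "window c1 a (m - 1) \<noteq> window c2 a (m - 1)"
    and "window c1 a (m - 1) = window c1 (a + int (n - (m - 1))) (m - 1)"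
    and "window c2 a (m - 1) = window c2 (a + int (n - (m - 1))) (m - 1)"
  shows "periodic_pair p m f (window c1 a n) (window c2 a n)"
proof -
  have "window c1 a n \<noteq> window c2 a n"
    using assms(4,5) left_k_window[of "m - 1" n] by (metis diff_le_self le_trans)
  with assms show ?thesis
    by (auto simp: periodic_pair_def left_k_window right_k_window word_over_window succ_word_window)
qed

lemma infinite_imp_repetition:
  fixes D :: "int set"
  assumes "infinite D" and "finite (g ` D)"
  obtains j j' where "j \<in> D" and "j < j'" and "g j = g j'"
proof -
  obtain j0 where "j0 \<in> D" and "infinite {j \<in> D. g j = g j0}"
    using pigeonhole_infinite[OF assms] by blast
  then have "{j \<in> D. g j = g j0} - {j0} \<noteq> {}"
    by (metis infinite_imp_nonempty infinite_remove)
  then obtain j1 where "j1 \<in> D" "g j1 = g j0" "j1 \<noteq> j0"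
    by blast
  with \<open>j0 \<in> D\<close> show ?thesis
    using that by (metis linorder_neqE)
qed

lemma pair_of_equal_images:
  assumes LR: "L + 1 + R = m" and c1: "c1 \<in> configs p" and c2: "c2 \<in> configs p"
    and "global_map f L R c1 = global_map f L R c2" and "c1 \<noteq> c2"
  shows "(\<exists>\<alpha> \<beta>. replaceable p m f \<alpha> \<beta>) \<or> (\<exists>\<alpha> \<beta>. periodic_pair p m f \<alpha> \<beta>)"
proof -
  have agree: "\<And>a. f (window c1 a m) = f (window c2 a m)"
    using assms global_map_eq_iff[OF LR] by blast
  obtain d where d: "c1 d \<noteq> c2 d"
    using \<open>c1 \<noteq> c2\<close> by blast
  define D where "D = {j. window c1 j (m - 1) \<noteq> window c2 j (m - 1)}"
  show ?thesis
  proof (cases "finite D")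
    case False
    let ?g = "\<lambda>j. (window c1 j (m - 1), window c2 j (m - 1))"
    have "?g ` D \<subseteq> range (\<lambda>j. window c1 j (m - 1)) \<times> range (\<lambda>j. window c2 j (m - 1))"
      by auto
    then have "finite (?g ` D)"
      using finite_range_window[OF c1] finite_range_window[OF c2] finite_subset by blast
    then obtain j j' where "j \<in> D" "j < j'" "?g j = ?g j'"
      using infinite_imp_repetition[OF False] by blast
    moreover define n where "n = nat (j' - j) + (m - 1)"
    ultimately have "periodic_pair p m f (window c1 j n) (window c2 j n)"
      using assms by (intro periodic_pair_windowI[OF c1 c2 agree]) (auto simp: D_def)
    then show ?thesis
      by blast
  next
    case True
    obtain a where a: "a \<le> d - int (m - 1)" "a \<notin> D"
      using infinite_Iic[of "d - int (m - 1)"] True finite_subset by (metis atMost_iff subsetI)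
    obtain b where b: "d + 1 \<le> b" "b \<notin> D"
      using infinite_Ici[of "d + 1"] True finite_subset by (metis atLeast_iff subsetI)
    define n where "n = nat (b - a) + (m - 1)"
    have "window c1 a n ! nat (d - a) \<noteq> window c2 a n ! nat (d - a)"
      using a b d unfolding n_def by simp
    then have "window c1 a n \<noteq> window c2 a n"
      by metis
    with a b have "replaceable p m f (window c1 a n) (window c2 a n)"
      using assms by (intro replaceable_windowI[OF c1 c2 agree]) (auto simp: D_def n_def)
    then show ?thesis
      by blast
  qed
qed

lemma not_inj_on_global_mapI:
  assumes "L + 1 + R = m" and "c1 \<in> configs p" and "c2 \<in> configs p" and "c1 \<noteq> c2"
    and "\<And>a. f (window c1 a m) = f (window c2 a m)"
  shows "\<not> inj_on (global_map f L R) (configs p)"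
  using assms global_map_eq_iff[OF assms(1), of f c1 c2] unfolding inj_on_def by blast

definition zero_extension :: "nat list \<Rightarrow> int \<Rightarrow> nat" where
  "zero_extension w i = (if 0 \<le> i \<and> i < int (length w) then w ! nat i else 0)"

lemma zero_extension_in_configs:
  assumes "word_over p w" and "0 < p"
  shows "zero_extension w \<in> configs p"
proof -
  have "zero_extension w i < p" for i
  proof (cases "0 \<le> i \<and> i < int (length w)")
    case True
    then have "w ! nat i \<in> set w"
      by (simp add: nat_less_iff)
    then show ?thesis
      using True assms(1) by (auto simp: zero_extension_def word_over_def)
  qed (use assms(2) in \<open>auto simp: zero_extension_def\<close>)
  then show ?thesis
    by (simp add: configs_def)
qed

lemma window_zero_extension:
  "j + l \<le> length w \<Longrightarrow> window (zero_extension w) (int j) l = take l (drop j w)"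
  by (rule nth_equalityI) (auto simp: zero_extension_def nat_add_distrib)

lemma zero_extension_eq_near_ends:
  assumes "length \<alpha> = length \<beta>" and "l \<le> length \<alpha>"
    and "left_k l \<alpha> = left_k l \<beta>" and "right_k l \<alpha> = right_k l \<beta>"
    and "i < int l \<or> int (length \<alpha> - l) \<le> i"
  shows "zero_extension \<alpha> i = zero_extension \<beta> i"
proof (cases "0 \<le> i \<and> i < int (length \<alpha>)")
  case True
  then obtain x where i: "i = int x" and x: "x < length \<alpha>"
    by (metis nonneg_int_cases of_nat_less_iff)
  show ?thesis
  proof (cases "x < l")
    case True
    then have "take l \<alpha> ! x = take l \<beta> ! x"
      using assms(3) by (simp add: left_k_def)
    then show ?thesis
      using True i x assms(1) by (simp add: zero_extension_def)
  next
    case False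
    then have "drop (length \<alpha> - l) \<alpha> ! (x - (length \<alpha> - l))
             = drop (length \<alpha> - l) \<beta> ! (x - (length \<alpha> - l))"
      using assms(1,4) by (simp add: right_k_def)
    then show ?thesis
      using False i x assms by (simp add: zero_extension_def)
  qed
next
  case False
  then show ?thesis
    using assms(1) by (auto simp: zero_extension_def)
qed

lemma replaceable_imp_not_inj:
  assumes "0 < p" and LR: "L + 1 + R = m" and "replaceable p m f \<alpha> \<beta>"
  shows "\<not> inj_on (global_map f L R) (configs p)"
proof -
  let ?n = "length \<alpha>"
  have len: "length \<beta> = ?n" and n: "2 * m - 1 \<le> ?n" and "\<alpha> \<noteq> \<beta>"
    and left: "left_k (m - 1) \<alpha> = left_k (m - 1) \<beta>"
    and right: "right_k (m - 1) \<alpha> = right_k (m - 1) \<beta>"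
    and succ: "succ_word f m \<alpha> = succ_word f m \<beta>"
    and words: "word_over p \<alpha>" "word_over p \<beta>"
    using assms(3) by (auto simp: replaceable_def)
  have agree: "f (window (zero_extension \<alpha>) a m) = f (window (zero_extension \<beta>) a m)" for a
  proof (cases "0 \<le> a \<and> a + int m \<le> int ?n")
    case True
    then obtain j where "a = int j" and "j + m \<le> ?n"
      by (metis nonneg_int_cases of_nat_add of_nat_le_iff)
    then show ?thesis
      using window_zero_extension[of j m] succ_word_eqD[OF succ len[symmetric], of j] len
      by simp
  next
    case False
    \<comment> \<open>a window sticking out of the word only meets its first or its last m-1 letters\<close>
    have "window (zero_extension \<alpha>) a m = window (zero_extension \<beta>) a m"
      using n False
      by (intro nth_equalityI) (auto intro!: zero_extension_eq_near_ends[OF len[symmetric] _ left right])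
    then show ?thesis
      by simp
  qed
  have "zero_extension \<alpha> \<noteq> zero_extension \<beta>"
    using \<open>\<alpha> \<noteq> \<beta>\<close> window_zero_extension[of 0 ?n \<alpha>] window_zero_extension[of 0 ?n \<beta>] len by auto
  moreover have "zero_extension \<alpha> \<in> configs p" and "zero_extension \<beta> \<in> configs p"
    using assms(1) words by (simp_all add: zero_extension_in_configs)
  ultimately show ?thesis
    using not_inj_on_global_mapI[OF LR _ _ _ agree] by blast
qed

definition periodic_extension :: "nat \<Rightarrow> nat list \<Rightarrow> int \<Rightarrow> nat" where
  "periodic_extension k w i = w ! nat (i mod int k)"

lemma periodic_extension_in_configs:
  assumes "word_over p w" and "0 < k" and "k \<le> length w"
  shows "periodic_extension k w \<in> configs p"
proof -
  have "i mod int k < int (length w)" for i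
    using assms(2,3) by (meson of_nat_0_less_iff of_nat_le_iff order_less_le_trans pos_mod_bound)
  then have "nat (i mod int k) < length w" for i
    by (simp add: nat_less_iff \<open>0 < k\<close>)
  then have "w ! nat (i mod int k) \<in> set w" for i
    by simp
  then show ?thesis
    using assms(1) by (auto simp: configs_def periodic_extension_def word_over_def subset_iff)
qed

lemma nth_mod_period:
  assumes period: "\<And>j. j + k < length w \<Longrightarrow> w ! (j + k) = w ! j"
    and "0 < k" and "x < length w"
  shows "w ! x = w ! (x mod k)"
  using \<open>x < length w\<close>
proof (induction x rule: less_induct)
  case (less x)
  show ?case
  proof (cases "x < k")
    case False
    then have "w ! x = w ! (x - k)"
      using period[of "x - k"] less.prems by simp
    also have "\<dots> = w ! ((x - k) mod k)"
      using less.IH[of "x - k"] less.prems False \<open>0 < k\<close> by simp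
    finally show ?thesis
      using False by (simp add: le_mod_geq)
  qed simp
qed

lemma window_periodic_extension:
  assumes period: "\<And>j. j + k < length w \<Longrightarrow> w ! (j + k) = w ! j"
    and "0 < k" and "k + l \<le> length w + 1"
  shows "window (periodic_extension k w) a l = take l (drop (nat (a mod int k)) w)"
proof (rule nth_equalityI)
  have "nat (a mod int k) < k"
    using \<open>0 < k\<close> by (simp add: nat_less_iff)
  then show "length (window (periodic_extension k w) a l)
      = length (take l (drop (nat (a mod int k)) w))"
    using assms(3) by simp
  fix j
  assume "j < length (window (periodic_extension k w) a l)"
  then have "nat (a mod int k) + j < length w"
    using \<open>nat (a mod int k) < k\<close> assms(3) by simp
  moreover have "int ((nat (a mod int k) + j) mod k) = (a + int j) mod int k"
    using \<open>0 < k\<close> by (simp add: of_nat_mod mod_add_left_eq)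
  then have "(nat (a mod int k) + j) mod k = nat ((a + int j) mod int k)"
    by (metis nat_int)
  ultimately show "window (periodic_extension k w) a l ! j = take l (drop (nat (a mod int k)) w) ! j"
    using \<open>j < _\<close> nth_mod_period[OF period \<open>0 < k\<close>] by (simp add: periodic_extension_def)
qed

lemma left_k_eq_right_k_period:
  assumes "left_k l w = right_k l w" and "l \<le> length w" and "j + (length w - l) < length w"
  shows "w ! (j + (length w - l)) = w ! j"
proof -
  have "take l w ! j = drop (length w - l) w ! j"
    using assms(1) by (simp add: left_k_def right_k_def)
  then show ?thesis
    using assms(2,3) by (simp add: add.commute)
qed

lemma periodic_pair_imp_not_inj:
  assumes LR: "L + 1 + R = m" and "periodic_pair p m f \<alpha> \<beta>"
  shows "\<not> inj_on (global_map f L R) (configs p)"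
proof -
  let ?n = "length \<alpha>"
  define k where "k = ?n - (m - 1)"
  have len: "length \<beta> = ?n" and n: "m \<le> ?n" and "\<alpha> \<noteq> \<beta>"
    and succ: "succ_word f m \<alpha> = succ_word f m \<beta>"
    and words: "word_over p \<alpha>" "word_over p \<beta>"
    using assms(2) by (auto simp: periodic_pair_def)
  have k: "0 < k" "k \<le> ?n" "k + m = ?n + 1"
    using n LR by (auto simp: k_def)
  have period_\<alpha>: "\<alpha> ! (j + k) = \<alpha> ! j" if "j + k < ?n" for j
    using assms(2) that left_k_eq_right_k_period[of "m - 1" \<alpha> j] n by (simp add: periodic_pair_def k_def)
  have period_\<beta>: "\<beta> ! (j + k) = \<beta> ! j" if "j + k < length \<beta>" for j
    using assms(2) that left_k_eq_right_k_period[of "m - 1" \<beta> j] n len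
    by (simp add: periodic_pair_def k_def)
  note window_\<alpha> = window_periodic_extension[OF period_\<alpha>, of m]
    and window_\<beta> = window_periodic_extension[OF period_\<beta>, of m]
  have agree: "f (window (periodic_extension k \<alpha>) a m) = f (window (periodic_extension k \<beta>) a m)" for a
  proof -
    have "nat (a mod int k) < k"
      using k by (simp add: nat_less_iff)
    then have "nat (a mod int k) + m \<le> ?n"
      using k by simp
    then show ?thesis
      using window_\<alpha> window_\<beta> k len succ_word_eqD[OF succ len[symmetric]] by simp
  qed
  have "periodic_extension k \<alpha> \<noteq> periodic_extension k \<beta>"
  proof
    obtain x where "x < ?n" and "\<alpha> ! x \<noteq> \<beta> ! x"
      using \<open>\<alpha> \<noteq> \<beta>\<close> len nth_equalityI by metis
    moreover assume "periodic_extension k \<alpha> = periodic_extension k \<beta>"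
    then have "periodic_extension k \<alpha> (int x) = periodic_extension k \<beta> (int x)"
      by simp
    ultimately show False
      using nth_mod_period[OF period_\<alpha> k(1)] nth_mod_period[OF period_\<beta> k(1)] len
      by (simp add: periodic_extension_def nat_mod_distrib)
  qed
  moreover have "periodic_extension k \<alpha> \<in> configs p" and "periodic_extension k \<beta> \<in> configs p"
    using words k len by (simp_all add: periodic_extension_in_configs)
  ultimately show ?thesis
    using not_inj_on_global_mapI[OF LR _ _ _ agree] by blast
qed

theorem theorem1:
  fixes p m L R :: nat and f :: "nat list \<Rightarrow> nat"
  assumes "p \<ge> 2" and "m \<ge> 2" and "L + 1 + R = m"
    and "local_rule p m f"
  shows "inj_on (global_map f L R) (configs p) \<longleftrightarrow>
           \<not> (\<exists>\<alpha> \<beta>. replaceable p m f \<alpha> \<beta>) \<and> \<not> (\<exists>\<alpha> \<beta>. periodic_pair p m f \<alpha> \<beta>)"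
proof
  assume "inj_on (global_map f L R) (configs p)"
  then show "\<not> (\<exists>\<alpha> \<beta>. replaceable p m f \<alpha> \<beta>) \<and> \<not> (\<exists>\<alpha> \<beta>. periodic_pair p m f \<alpha> \<beta>)"
    using replaceable_imp_not_inj[OF _ assms(3)] periodic_pair_imp_not_inj[OF assms(3)] assms(1)
    by auto
next
  assume "\<not> (\<exists>\<alpha> \<beta>. replaceable p m f \<alpha> \<beta>) \<and> \<not> (\<exists>\<alpha> \<beta>. periodic_pair p m f \<alpha> \<beta>)"
  then show "inj_on (global_map f L R) (configs p)"
    using pair_of_equal_images[OF assms(3)] unfolding inj_on_def by blast
qed

end
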